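(* Let $g\ge1$, $n\ge3$, $k\in\{1,\dots,n\}$, and let $y\in A_g^n$ be a point at which $f_k$ attains its minimum on $A_g^n$. Let $i_0$ be the minimal index with $y_{i_0}=y_n$. Then (i) $i_0\le k$; (ii) $y_i>y_{i+1}$ for all $1\le i\le i_0-1$; (iii) $y_1\cdots y_i=g(y_{i+1}+\dots+y_n)$ for all $1\le i\le i_0-1$.
   Context: For $g,n\ge1$, $A_g^n\subseteq\mathbb{R}^n$ is the (compact) set of $(x_1,\dots,x_n)$ with $x_1\ge\dots\ge x_n\ge0$, $x_1+\dots+x_n=1/g$, and $x_1\cdots x_k\le g(x_{k+1}+\dots+x_n)$ for all $k=1,\dots,n-1$. For $1\le k\le n$, $f_k\colon A_g^n\to\mathbb{R}$, $f_k(x)=x_1\cdots x_k$. *)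

theory Defs
  imports Complex_Main
begin

text \<open>Points of R^n are represented as functions x :: nat => real, with coordinates
  x 1, ..., x n (values at other indices are irrelevant).\<close>

definition A_set :: "nat \<Rightarrow> nat \<Rightarrow> (nat \<Rightarrow> real) set" where
  "A_set g n = {x. (\<forall>i\<in>{1..<n}. x i \<ge> x (Suc i)) \<and> x n \<ge> 0
      \<and> (\<Sum>i=1..n. x i) = 1 / real g
      \<and> (\<forall>k\<in>{1..<n}. (\<Prod>i=1..k. x i) \<le> real g * (\<Sum>i=Suc k..n. x i))}"

definition f_fun :: "nat \<Rightarrow> (nat \<Rightarrow> real) \<Rightarrow> real" where
  "f_fun k x = (\<Prod>i=1..k. x i)"

end

theory Submission
  imports Defs
begin

text \<open>Points of \<open>A\<^sub>g\<^sup>n\<close> have positive coordinates, so a direction \<open>v\<close> of total weight \<open>0\<close>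
  that does not increase across a tie of \<open>y\<close> gives points \<open>y + e v \<in> A\<^sub>g\<^sup>n\<close> for small \<open>e > 0\<close>,
  provided every constraint it tightens is slack at \<open>y\<close>; constraints beyond \<open>i\<^sub>0\<close> hold
  automatically because the constant tail is at most \<open>1/n\<close>. If \<open>i\<^sub>0 > k\<close>, lowering
  \<open>y\<^sub>1, \<dots>, y\<^sub>i\<^sub>0\<^sub>-\<^sub>1\<close> and raising the tail decreases \<open>f\<^sub>k\<close>. A tie before \<open>i\<^sub>0\<close>, or a slack
  constraint at \<open>i < i\<^sub>0 - 1\<close>, allows moving mass from a later to an earlier one of the first
  \<open>k\<close> coordinates, which decreases their product; a constraint is never tight at a tie.
  A slack constraint at \<open>i\<^sub>0 - 1\<close> makes both \<open>y \<plusminus> e v\<close> admissible for a suitable \<open>v\<close>, while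
  \<open>f\<^sub>k(y + e v) f\<^sub>k(y - e v) < f\<^sub>k(y)\<^sup>2\<close>.\<close>

lemma chain_antimono:
  fixes x :: "nat \<Rightarrow> 'a::order"
  assumes step: "\<And>i. m \<le> i \<Longrightarrow> i < n \<Longrightarrow> x (Suc i) \<le> x i"
    and "m \<le> i" "i \<le> j" "j \<le> n"
  shows "x j \<le> x i"
  using \<open>i \<le> j\<close> \<open>j \<le> n\<close>
proof (induction j rule: dec_induct)
  case (step j)
  then have "x (Suc j) \<le> x j" using \<open>m \<le> i\<close> by (intro assms(1)) auto
  with step show ?case by simp
qed simp

lemma sum_split_at:
  fixes f :: "nat \<Rightarrow> 'a::comm_monoid_add"
  assumes "m \<le> Suc l" "l \<le> n"
  shows "(\<Sum>i=m..n. f i) = (\<Sum>i=m..l. f i) + (\<Sum>i=Suc l..n. f i)"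
  using sum.ub_add_nat[of m l f "n - l"] assms by simp

lemma prod_split_at:
  fixes f :: "nat \<Rightarrow> 'a::comm_monoid_mult"
  assumes "m \<le> Suc l" "l \<le> n"
  shows "(\<Prod>i=m..n. f i) = (\<Prod>i=m..l. f i) * (\<Prod>i=Suc l..n. f i)"
  using prod.ub_add_nat[of m l f "n - l"] assms by simp

lemma sum_tail_perturbation:
  fixes y v :: "nat \<Rightarrow> real"
  assumes "(\<Sum>i=1..n. v i) = 0" "l \<le> n"
  shows "(\<Sum>i=Suc l..n. y i + e * v i) = (\<Sum>i=Suc l..n. y i) - e * (\<Sum>i=1..l. v i)"
proof -
  have "(\<Sum>i=Suc l..n. v i) = - (\<Sum>i=1..l. v i)"
    using sum_split_at[of 1 l n v] assms by simp
  then show ?thesis by (simp add: sum.distrib sum_distrib_left[symmetric])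
qed

lemma prod_strict_mono_at:
  fixes f h :: "nat \<Rightarrow> real"
  assumes "finite A" "a \<in> A" and "\<And>t. t \<in> A \<Longrightarrow> 0 \<le> f t \<and> f t \<le> h t"
    and "f a < h a" and "\<And>t. t \<in> A \<Longrightarrow> 0 < h t"
  shows "prod f A < prod h A"
proof -
  have "prod f A = f a * prod f (A - {a})" using assms by (simp add: prod.remove)
  also have "\<dots> \<le> f a * prod h (A - {a})"
    using assms by (intro mult_left_mono prod_mono) auto
  also have "\<dots> < h a * prod h (A - {a})"
    using assms by (intro mult_strict_right_mono prod_pos) auto
  also have "\<dots> = prod h A" using assms by (simp add: prod.remove)
  finally show ?thesis .
qed

lemma prod_transfer_less:
  fixes y :: "nat \<Rightarrow> real"
  assumes A: "finite A" "h \<in> A" "j \<in> A" "h \<noteq> j" and "y j \<le> y h" "0 < e"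
    and pos: "\<And>t. t \<in> A \<Longrightarrow> 0 < y t"
  shows "(\<Prod>t\<in>A. y t + e * ((if t = h then 1 else 0) - (if t = j then 1 else 0))) < (\<Prod>t\<in>A. y t)"
proof -
  define R where "R = A - {h} - {j}"
  have split: "prod f A = f h * f j * prod f R" for f :: "nat \<Rightarrow> real"
    using A unfolding R_def by (simp add: prod.remove mult.assoc)
  have "(y h + e) * (y j - e) = y h * y j - e * (y h - y j) - e * e"
    by (simp add: algebra_simps)
  also have "\<dots> < y h * y j"
  proof -
    have "0 \<le> e * (y h - y j)" "0 < e * e" using assms by simp_all
    then show ?thesis by linarith
  qed
  finally have hj: "(y h + e) * (y j - e) < y h * y j" .
  have "(\<Prod>t\<in>R. y t + e * ((if t = h then 1 else 0) - (if t = j then 1 else 0))) = prod y R"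
    unfolding R_def by (intro prod.cong) auto
  moreover have "0 < prod y R" using pos unfolding R_def by (intro prod_pos) auto
  ultimately show ?thesis using hj A by (subst (1 2) split) simp
qed

lemma
  assumes "x \<in> A_set g n"
  shows A_set_step: "\<And>i. 1 \<le> i \<Longrightarrow> i < n \<Longrightarrow> x (Suc i) \<le> x i"
    and A_set_last_nonneg: "0 \<le> x n"
    and A_set_sum: "(\<Sum>i=1..n. x i) = 1 / real g"
    and A_set_constraint:
      "\<And>l. 1 \<le> l \<Longrightarrow> l < n \<Longrightarrow> (\<Prod>i=1..l. x i) \<le> real g * (\<Sum>i=Suc l..n. x i)"
  using assms unfolding A_set_def by auto

lemma A_setI:
  assumes "\<And>i. 1 \<le> i \<Longrightarrow> i < n \<Longrightarrow> x (Suc i) \<le> x i" and "0 \<le> x n"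
    and "(\<Sum>i=1..n. x i) = 1 / real g"
    and "\<And>l. 1 \<le> l \<Longrightarrow> l < n \<Longrightarrow> (\<Prod>i=1..l. x i) \<le> real g * (\<Sum>i=Suc l..n. x i)"
  shows "x \<in> A_set g n"
  using assms unfolding A_set_def by auto

lemma A_set_antimono:
  "x \<in> A_set g n \<Longrightarrow> 1 \<le> i \<Longrightarrow> i \<le> j \<Longrightarrow> j \<le> n \<Longrightarrow> x j \<le> x i"
  by (rule chain_antimono[of 1 n x]) (auto intro: A_set_step)

text \<open>If \<open>x\<^sub>j\<close> is the first vanishing coordinate, the constraint at \<open>j - 1\<close> bounds a positive
  product by \<open>0\<close>; for \<open>j = 1\<close> the coordinate sum would vanish.\<close>

lemma A_set_last_pos:
  assumes x: "x \<in> A_set g n" and "1 \<le> g" "1 \<le> n"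
  shows "0 < x n"
proof (rule ccontr)
  assume "\<not> 0 < x n"
  then have xn: "x n = 0" using A_set_last_nonneg[OF x] by simp
  define j where "j = (LEAST j. 1 \<le> j \<and> x j = 0)"
  have j: "1 \<le> j" "x j = 0" unfolding j_def by (rule LeastI2[of _ n]; use xn \<open>1 \<le> n\<close> in simp)+
  have jn: "j \<le> n" unfolding j_def by (rule Least_le) (use xn \<open>1 \<le> n\<close> in simp)
  have nonneg: "0 \<le> x t" if "1 \<le> t" "t \<le> n" for t
    using A_set_antimono[OF x that order_refl] A_set_last_nonneg[OF x] that by simp
  have zero: "x t = 0" if "j \<le> t" "t \<le> n" for t
    using A_set_antimono[OF x j(1) that] nonneg[of t] j that by simp
  show False
  proof (cases "j = 1")
    case True
    then have "(\<Sum>i=1..n. x i) = 0" using zero by simp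
    with A_set_sum[OF x] \<open>1 \<le> g\<close> show False by simp
  next
    case False
    have "0 < x t" if "1 \<le> t" "t < j" for t
      using not_less_Least[of t "\<lambda>j. 1 \<le> j \<and> x j = 0"] nonneg[of t] that jn
      unfolding j_def by force
    then have "0 < (\<Prod>i=1..j-1. x i)" by (intro prod_pos) auto
    moreover have "(\<Sum>i=Suc (j-1)..n. x i) = 0" using zero False by (intro sum.neutral) auto
    moreover have "(\<Prod>i=1..j-1. x i) \<le> real g * (\<Sum>i=Suc (j-1)..n. x i)"
      using j jn False by (intro A_set_constraint[OF x]) auto
    ultimately show False by simp
  qed
qed

lemma A_set_pos:
  assumes x: "x \<in> A_set g n" and "1 \<le> g" "1 \<le> j" "j \<le> n"
  shows "0 < x j"
  using A_set_last_pos[OF x] A_set_antimono[OF x, of j n] assms by fastforce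

lemma A_set_less_one:
  assumes x: "x \<in> A_set g n" and g: "1 \<le> g" and "2 \<le> n" "1 \<le> j" "j \<le> n"
  shows "x j < 1"
proof -
  have i: "(if j = 1 then 2 else 1) \<in> {1..n} - {j}" using assms by auto
  have "(\<Sum>i=1..n. x i) = x j + (\<Sum>i\<in>{1..n}-{j}. x i)" using assms by (simp add: sum.remove)
  moreover have "0 < (\<Sum>i\<in>{1..n}-{j}. x i)"
    using i by (intro sum_pos) (auto intro: A_set_pos[OF x g])
  moreover have "1 / real g \<le> 1" using g by simp
  ultimately show ?thesis using A_set_sum[OF x] by simp
qed

text \<open>With \<open>r = x\<^sub>l = x\<^sub>l\<^sub>+\<^sub>1\<close> and \<open>T\<close> the tail sum after \<open>l\<close>, a tight constraint at \<open>l\<close> combined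
  with the constraints at \<open>l - 1\<close> and \<open>l + 1\<close> gives \<open>T \<le> r (r + T)\<close> and \<open>r T \<le> T - r\<close>,
  hence \<open>r \<ge> 1\<close>.\<close>

lemma A_set_constraint_strict_at_tie:
  assumes x: "x \<in> A_set g n" and g: "1 \<le> g"
    and l: "1 \<le> l" "Suc l < n" and tie: "x l = x (Suc l)"
  shows "(\<Prod>i=1..l. x i) < real g * (\<Sum>i=Suc l..n. x i)"
proof -
  have pos: "0 < x j" if "1 \<le> j" "j \<le> n" for j using A_set_pos[OF x g that] .
  have "(\<Prod>i=1..l. x i) \<noteq> real g * (\<Sum>i=Suc l..n. x i)"
  proof
    assume tight: "(\<Prod>i=1..l. x i) = real g * (\<Sum>i=Suc l..n. x i)"
    define r where "r = x l"
    define T where "T = (\<Sum>i=Suc l..n. x i)"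
    have r: "0 < r" "r < 1" unfolding r_def using l by (auto intro: pos A_set_less_one[OF x g])
    have gpos: "0 < real g" using g by simp
    have T_next: "(\<Sum>i=Suc (Suc l)..n. x i) = T - r"
      using sum.atLeast_Suc_atMost[of "Suc l" n x] l tie unfolding T_def r_def by simp
    show False
    proof (cases "l = 1")
      case True
      have "x n \<le> (\<Sum>i=Suc (Suc l)..n. x i)" using l by (intro member_le_sum) (force intro: less_imp_le pos)+
      then have "r < T" using T_next pos[of n] l by simp
      moreover have "T \<le> real g * T" using g r \<open>r < T\<close> by simp
      ultimately show False using tight True unfolding T_def r_def by simp
    next
      case False
      define P where "P = (\<Prod>i=1..l-1. x i)"
      have P_l: "(\<Prod>i=1..l. x i) = P * r"
        using prod.cl_ivl_Suc[of x 1 "l - 1"] l unfolding P_def r_def by simp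
      have P_next: "(\<Prod>i=1..Suc l. x i) = P * r * r" using P_l tie unfolding r_def by simp
      have T_prev: "(\<Sum>i=Suc (l-1)..n. x i) = r + T"
        using sum.atLeast_Suc_atMost[of l n x] l False unfolding T_def r_def by simp
      have "real g * T = P * r" using tight P_l unfolding T_def by simp
      also have "\<dots> \<le> real g * (r + T) * r"
        using A_set_constraint[OF x, of "l - 1"] l False T_prev r unfolding P_def
        by (intro mult_right_mono) auto
      finally have "real g * T \<le> real g * (r * (r + T))" by (simp add: algebra_simps)
      then have A1: "T \<le> r * (r + T)" using gpos by simp
      have "real g * (r * T) = P * r * r" using tight P_l unfolding T_def by simp
      also have "\<dots> \<le> real g * (T - r)"
        using A_set_constraint[OF x, of "Suc l"] l T_next P_next by simp
      finally have A2: "r * T \<le> T - r" using gpos by simp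
      from A1 A2 have "r \<le> r * r" by (simp add: algebra_simps)
      then show False using r by simp
    qed
  qed
  then show ?thesis using A_set_constraint[OF x, of l] l by simp
qed

text \<open>Beyond a constant tail \<open>c = x\<^sub>n \<le> 1/n\<close> the constraints take care of themselves: each
  further step multiplies the product by \<open>c \<le> 1\<close>, while \<open>(n + 1 - p) c \<le> 1 \<le> n - l\<close>.\<close>

lemma prod_le_on_constant_tail:
  fixes x :: "nat \<Rightarrow> real" and G :: real
  assumes nonneg: "\<And>i. 1 \<le> i \<Longrightarrow> i \<le> n \<Longrightarrow> 0 \<le> x i" and small: "real n * x n \<le> 1"
    and const: "\<And>j. p \<le> j \<Longrightarrow> j \<le> n \<Longrightarrow> x j = x n"
    and p: "1 \<le> p" and G: "0 \<le> G"
    and head: "(\<Prod>i=1..p-1. x i) \<le> G * (\<Sum>i=p..n. x i)"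
    and l: "p \<le> l" "l < n"
  shows "(\<Prod>i=1..l. x i) \<le> G * (\<Sum>i=Suc l..n. x i)"
proof -
  define c where "c = x n"
  define Q where "Q = (\<Prod>i=1..p-1. x i)"
  have xc: "x j = c" if "p \<le> j" "j \<le> n" for j unfolding c_def using that by (rule const)
  have c0: "0 \<le> c" unfolding c_def using nonneg[of n] l by simp
  have "real (Suc n - p) * c \<le> real n * c" using p c0 by (intro mult_right_mono) auto
  moreover have "1 * c \<le> real n * c" using l c0 by (intro mult_right_mono) auto
  ultimately have c: "c \<le> 1" "real (Suc n - p) * c \<le> 1" using small unfolding c_def by auto
  have "(\<Prod>i=1..l. x i) = Q * (\<Prod>i=p..l. x i)"
    using prod_split_at[of 1 "p - 1" l x] p l unfolding Q_def by simp
  also have "(\<Prod>i=p..l. x i) = (\<Prod>i=p..l. c)" by (intro prod.cong refl xc) (use l in auto)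
  finally have prod_eq: "(\<Prod>i=1..l. x i) = Q * c ^ (Suc l - p)" by simp
  have "(\<Sum>i=p..n. x i) = (\<Sum>i=p..n. c)" by (intro sum.cong refl xc) auto
  then have "(\<Sum>i=p..n. x i) = real (Suc n - p) * c" by simp
  then have Q: "Q \<le> G * (real (Suc n - p) * c)" using head unfolding Q_def by simp
  have "(\<Sum>i=Suc l..n. x i) = (\<Sum>i=Suc l..n. c)" by (intro sum.cong refl xc) (use l in auto)
  then have "(\<Sum>i=Suc l..n. x i) = real (n - l) * c" by simp
  moreover have "0 \<le> Q" unfolding Q_def using p l by (intro prod_nonneg nonneg) auto
  moreover have "c ^ (Suc l - p) \<le> c" using c c0 l power_decreasing[of 1 "Suc l - p" c] by simp
  ultimately have "(\<Prod>i=1..l. x i) \<le> Q * c" using prod_eq by (simp add: mult_left_mono)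
  also have "\<dots> \<le> G * (real (Suc n - p) * c) * c" using Q c0 by (rule mult_right_mono)
  also have "\<dots> = G * c * (real (Suc n - p) * c)" by (simp add: ac_simps)
  also have "\<dots> \<le> G * c * real (n - l)"
    using c c0 G l by (intro mult_left_mono) auto
  also have "\<dots> = G * (\<Sum>i=Suc l..n. x i)"
    using \<open>(\<Sum>i=Suc l..n. x i) = real (n - l) * c\<close> by simp
  finally show ?thesis .
qed

lemma A_setI_constant_tail:
  assumes g: "1 \<le> g"
    and step: "\<And>i. 1 \<le> i \<Longrightarrow> i < n \<Longrightarrow> x (Suc i) \<le> x i" and "0 \<le> x n"
    and sum: "(\<Sum>i=1..n. x i) = 1 / real g"
    and p: "1 \<le> p" "p \<le> n" and const: "\<And>j. p \<le> j \<Longrightarrow> j \<le> n \<Longrightarrow> x j = x n"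
    and head: "\<And>l. 1 \<le> l \<Longrightarrow> l < p \<Longrightarrow> (\<Prod>i=1..l. x i) \<le> real g * (\<Sum>i=Suc l..n. x i)"
  shows "x \<in> A_set g n"
proof (rule A_setI[OF step \<open>0 \<le> x n\<close> sum])
  have antimono: "x j \<le> x i" if "1 \<le> i" "i \<le> j" "j \<le> n" for i j
    by (rule chain_antimono[of 1 n x]) (use step that in auto)
  have nonneg: "0 \<le> x i" if "1 \<le> i" "i \<le> n" for i
    using antimono[OF that order_refl] \<open>0 \<le> x n\<close> by simp
  have "real n * x n = (\<Sum>i=1..n. x n)" by simp
  also have "\<dots> \<le> 1 / real g" unfolding sum[symmetric] by (intro sum_mono antimono) auto
  also have "\<dots> \<le> 1" using g by simp
  finally have small: "real n * x n \<le> 1" .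
  have head_p: "(\<Prod>i=1..p-1. x i) \<le> real g * (\<Sum>i=p..n. x i)"
  proof (cases "p = 1")
    case True
    then show ?thesis using sum g by simp
  next
    case False
    then show ?thesis using head[of "p - 1"] p by simp
  qed
  fix l assume l: "1 \<le> l" "l < n"
  show "(\<Prod>i=1..l. x i) \<le> real g * (\<Sum>i=Suc l..n. x i)"
  proof (cases "l < p")
    case True
    then show ?thesis using head l by simp
  next
    case False
    then show ?thesis
      by (intro prod_le_on_constant_tail[OF nonneg small const p(1) _ head_p]) (use l in auto)
  qed
qed

lemma eventually_perturbation_step_le:
  fixes y v :: "nat \<Rightarrow> real"
  assumes step: "\<And>t. 1 \<le> t \<Longrightarrow> t < n \<Longrightarrow> y (Suc t) \<le> y t"
    and compat: "\<And>t. 1 \<le> t \<Longrightarrow> t < n \<Longrightarrow> v t < v (Suc t) \<Longrightarrow> y (Suc t) < y t"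
  shows "\<forall>\<^sub>F e in at_right 0. \<forall>t\<in>{1..<n}. y (Suc t) + e * v (Suc t) \<le> y t + e * v t"
proof (intro eventually_ball_finite ballI)
  fix t assume t: "t \<in> {1..<n}"
  show "\<forall>\<^sub>F e in at_right 0. y (Suc t) + e * v (Suc t) \<le> y t + e * v t"
  proof (cases "v t < v (Suc t)")
    case True
    have "((\<lambda>e. (y t + e * v t) - (y (Suc t) + e * v (Suc t))) \<longlongrightarrow>
        (y t + 0 * v t) - (y (Suc t) + 0 * v (Suc t))) (at_right 0)"
      by (intro tendsto_intros)
    from order_tendstoD(1)[OF this, of 0] show ?thesis
      using compat[OF _ _ True] t by (auto elim: eventually_mono)
  next
    case False
    show ?thesis using eventually_at_right_less[of 0]
    proof eventually_elim
      case (elim e)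
      then have "e * v (Suc t) \<le> e * v t" using False by (intro mult_left_mono) auto
      then show ?case using step t by fastforce
    qed
  qed
qed simp

lemma eventually_admissible_perturbation:
  fixes y v :: "nat \<Rightarrow> real"
  assumes y: "y \<in> A_set g n" and g: "1 \<le> g"
    and vsum: "(\<Sum>t=1..n. v t) = 0"
    and compat: "\<And>t. 1 \<le> t \<Longrightarrow> t < n \<Longrightarrow> v t < v (Suc t) \<Longrightarrow> y (Suc t) < y t"
    and "finite L" and slack: "\<And>l. l \<in> L \<Longrightarrow> (\<Prod>i=1..l. y i) < real g * (\<Sum>i=Suc l..n. y i)"
  shows "\<forall>\<^sub>F e in at_right 0. 0 < e
    \<and> (\<forall>t\<in>{1..<n}. y (Suc t) + e * v (Suc t) \<le> y t + e * v t)
    \<and> (\<forall>t\<in>{1..n}. 0 < y t + e * v t)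
    \<and> (\<Sum>t=1..n. y t + e * v t) = 1 / real g
    \<and> (\<forall>l\<in>L. (\<Prod>i=1..l. y i + e * v i) < real g * (\<Sum>i=Suc l..n. y i + e * v i))"
proof -
  have "\<forall>\<^sub>F e in at_right 0. (\<Sum>t=1..n. y t + e * v t) = 1 / real g"
    using vsum A_set_sum[OF y] by (simp add: sum.distrib sum_distrib_left[symmetric])
  moreover have "\<forall>\<^sub>F e in at_right 0. \<forall>t\<in>{1..n}. 0 < y t + e * v t"
  proof (intro eventually_ball_finite ballI)
    fix t assume "t \<in> {1..n}"
    have "((\<lambda>e. y t + e * v t) \<longlongrightarrow> y t + 0 * v t) (at_right 0)" by (intro tendsto_intros)
    then show "\<forall>\<^sub>F e in at_right 0. 0 < y t + e * v t"
      using A_set_pos[OF y g] \<open>t \<in> {1..n}\<close> by (intro order_tendstoD(1)) auto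
  qed simp
  moreover have "\<forall>\<^sub>F e in at_right 0. \<forall>l\<in>L.
      (\<Prod>i=1..l. y i + e * v i) < real g * (\<Sum>i=Suc l..n. y i + e * v i)"
  proof (intro eventually_ball_finite ballI \<open>finite L\<close>)
    fix l assume "l \<in> L"
    have "((\<lambda>e. real g * (\<Sum>i=Suc l..n. y i + e * v i) - (\<Prod>i=1..l. y i + e * v i)) \<longlongrightarrow>
        real g * (\<Sum>i=Suc l..n. y i + 0 * v i) - (\<Prod>i=1..l. y i + 0 * v i)) (at_right 0)"
      by (intro tendsto_intros)
    from order_tendstoD(1)[OF this, of 0]
    show "\<forall>\<^sub>F e in at_right 0. (\<Prod>i=1..l. y i + e * v i) < real g * (\<Sum>i=Suc l..n. y i + e * v i)"
      using slack[OF \<open>l \<in> L\<close>] by (auto elim: eventually_mono)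
  qed
  moreover have "\<forall>\<^sub>F e in at_right 0. \<forall>t\<in>{1..<n}. y (Suc t) + e * v (Suc t) \<le> y t + e * v t"
    by (rule eventually_perturbation_step_le) (use A_set_step[OF y] compat in auto)
  ultimately show ?thesis
    using eventually_at_right_less[of 0] by eventually_elim (intro conjI; assumption)
qed

lemma admissible_perturbation_exists:
  fixes y v :: "nat \<Rightarrow> real"
  assumes "y \<in> A_set g n" "1 \<le> g" "(\<Sum>t=1..n. v t) = 0"
    and "\<And>t. 1 \<le> t \<Longrightarrow> t < n \<Longrightarrow> v t < v (Suc t) \<Longrightarrow> y (Suc t) < y t"
    and "finite L" "\<And>l. l \<in> L \<Longrightarrow> (\<Prod>i=1..l. y i) < real g * (\<Sum>i=Suc l..n. y i)"
  obtains e where "0 < e"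
    and "\<forall>t\<in>{1..<n}. y (Suc t) + e * v (Suc t) \<le> y t + e * v t"
    and "\<forall>t\<in>{1..n}. 0 < y t + e * v t"
    and "(\<Sum>t=1..n. y t + e * v t) = 1 / real g"
    and "\<forall>l\<in>L. (\<Prod>i=1..l. y i + e * v i) < real g * (\<Sum>i=Suc l..n. y i + e * v i)"
  using eventually_happens'[OF trivial_limit_at_right_real
      eventually_admissible_perturbation[OF assms]] by blast

locale f_minimizer =
  fixes g n k i0 :: nat and y :: "nat \<Rightarrow> real"
  assumes g_ge_1: "1 \<le> g" and n_ge_3: "3 \<le> n" and k_ge_1: "1 \<le> k" and k_le_n: "k \<le> n"
    and y_in_A: "y \<in> A_set g n"
    and y_min: "\<And>x. x \<in> A_set g n \<Longrightarrow> f_fun k y \<le> f_fun k x"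
    and i0_eq: "i0 = (LEAST i. 1 \<le> i \<and> y i = y n)"
begin

lemma y_pos: "1 \<le> j \<Longrightarrow> j \<le> n \<Longrightarrow> 0 < y j"
  by (rule A_set_pos[OF y_in_A g_ge_1])

lemma y_step: "1 \<le> t \<Longrightarrow> t < n \<Longrightarrow> y (Suc t) \<le> y t"
  by (rule A_set_step[OF y_in_A])

lemma
  shows i0_ge_1: "1 \<le> i0" and y_i0: "y i0 = y n" and i0_le_n: "i0 \<le> n"
proof -
  have "1 \<le> i0 \<and> y i0 = y n" unfolding i0_eq by (rule LeastI[of _ n]) (use n_ge_3 in auto)
  then show "1 \<le> i0" "y i0 = y n" by auto
  show "i0 \<le> n" unfolding i0_eq by (rule Least_le) (use n_ge_3 in auto)
qed

lemma y_last_less_before_i0: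
  assumes "1 \<le> t" "t < i0"
  shows "y n < y t"
proof -
  have "y t \<noteq> y n"
    using not_less_Least[of t "\<lambda>j. 1 \<le> j \<and> y j = y n"] assms unfolding i0_eq by blast
  moreover have "y n \<le> y t" using assms i0_le_n by (intro A_set_antimono[OF y_in_A]) auto
  ultimately show ?thesis by simp
qed

lemma y_eq_last_from_i0:
  assumes "i0 \<le> t" "t \<le> n"
  shows "y t = y n"
proof -
  have "y t \<le> y i0" by (rule A_set_antimono[OF y_in_A i0_ge_1 assms])
  moreover have "y n \<le> y t" using assms i0_ge_1 by (intro A_set_antimono[OF y_in_A]) auto
  ultimately show ?thesis using y_i0 by simp
qed

text \<open>Moving mass \<open>e\<close> from \<open>y\<^sub>j\<close> to \<open>y\<^sub>h\<close> (\<open>h < j \<le> k\<close>) keeps \<open>y\<close> nonincreasing if both ends of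
  the run are strict, and only the constraints between \<open>h\<close> and \<open>j\<close> can become tighter.\<close>

lemma no_improving_transfer:
  assumes hj: "1 \<le> h" "h < j" "j \<le> k"
    and left: "2 \<le> h \<Longrightarrow> y h < y (h - 1)"
    and right: "j < n \<Longrightarrow> y (Suc j) < y j"
    and slack: "\<And>l. l \<in> {h..<j} \<Longrightarrow> (\<Prod>i=1..l. y i) < real g * (\<Sum>i=Suc l..n. y i)"
  shows False
proof -
  define v :: "nat \<Rightarrow> real" where "v t = (if t = h then 1 else 0) - (if t = j then 1 else 0)" for t
  have jn: "j \<le> n" using hj k_le_n by simp
  have v_sum: "(\<Sum>t\<in>S. v t) = (if h \<in> S then 1 else 0) - (if j \<in> S then 1 else 0)" if "finite S" for S
    using that unfolding v_def by (simp add: sum_subtractf)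
  have vsum: "(\<Sum>t=1..n. v t) = 0" using v_sum[of "{1..n}"] hj jn by simp
  have compat: "y (Suc t) < y t" if "1 \<le> t" "t < n" "v t < v (Suc t)" for t
  proof -
    have "Suc t = h \<or> t = j" using that(3) hj unfolding v_def by (auto split: if_splits)
    then show ?thesis using left right that by auto
  qed
  obtain e where e: "0 < e"
    and step: "\<forall>t\<in>{1..<n}. y (Suc t) + e * v (Suc t) \<le> y t + e * v t"
    and pos: "\<forall>t\<in>{1..n}. 0 < y t + e * v t"
    and sum: "(\<Sum>t=1..n. y t + e * v t) = 1 / real g"
    and slack': "\<forall>l\<in>{h..<j}. (\<Prod>i=1..l. y i + e * v i) < real g * (\<Sum>i=Suc l..n. y i + e * v i)"
    by (rule admissible_perturbation_exists[OF y_in_A g_ge_1 vsum compat, where L = "{h..<j}"])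
      (use slack in auto)
  define x where "x t = y t + e * v t" for t
  have tail_eq: "(\<Sum>i=Suc l..n. x i) = (\<Sum>i=Suc l..n. y i)" if "l < h \<or> j \<le> l" "l \<le> n" for l
    using sum_tail_perturbation[OF vsum that(2), of y e] v_sum[of "{1..l}"] that hj
    unfolding x_def by auto
  have prod_less: "(\<Prod>i=1..l. x i) < (\<Prod>i=1..l. y i)" if "j \<le> l" "l \<le> n" for l
    unfolding x_def v_def
  proof (rule prod_transfer_less)
    show "y j \<le> y h" using hj jn by (intro A_set_antimono[OF y_in_A]) auto
  qed (use hj that e in \<open>auto intro: y_pos\<close>)
  have "x \<in> A_set g n"
  proof (rule A_setI)
    show "x (Suc t) \<le> x t" if "1 \<le> t" "t < n" for t using step that unfolding x_def by auto
    show "0 \<le> x n" using pos n_ge_3 unfolding x_def by (auto intro: less_imp_le)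
    show "(\<Sum>i=1..n. x i) = 1 / real g" using sum unfolding x_def .
    fix l assume l: "1 \<le> l" "l < n"
    consider "l < h" | "l \<in> {h..<j}" | "j \<le> l" by fastforce
    then show "(\<Prod>i=1..l. x i) \<le> real g * (\<Sum>i=Suc l..n. x i)"
    proof cases
      case 1
      then have "(\<Prod>i=1..l. x i) = (\<Prod>i=1..l. y i)" unfolding x_def v_def using hj
        by (intro prod.cong) auto
      then show ?thesis using tail_eq[of l] A_set_constraint[OF y_in_A l] 1 l by simp
    next
      case 2
      then show ?thesis using slack' unfolding x_def by (auto intro: less_imp_le)
    next
      case 3
      then show ?thesis using prod_less[of l] tail_eq[of l] A_set_constraint[OF y_in_A l] l by simp
    qed
  qed
  moreover have "f_fun k x < f_fun k y" using prod_less[of k] hj k_le_n unfolding f_fun_def by simp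
  ultimately show False using y_min by fastforce
qed

text \<open>Otherwise lowering \<open>y\<^sub>1, \<dots>, y\<^sub>i\<^sub>0\<^sub>-\<^sub>1\<close> by \<open>e\<close> and raising the constant tail would stay in
  \<open>A\<^sub>g\<^sup>n\<close> and decrease \<open>f\<^sub>k\<close>.\<close>

lemma i0_le_k: "i0 \<le> k"
proof (rule ccontr)
  assume "\<not> i0 \<le> k"
  then have ki: "k < i0" by simp
  define m where "m = Suc n - i0"
  have m: "real (card {i0..n}) = real m" "0 < real m" using i0_le_n unfolding m_def by auto
  define v :: "nat \<Rightarrow> real" where "v t = (if t < i0 then -1 else real (i0 - 1) / real m)" for t
  have v_head: "(\<Sum>t=1..l. v t) = - real l" if "l < i0" for l
  proof -
    have "(\<Sum>t=1..l. v t) = (\<Sum>t=1..l. -1)" using that by (intro sum.cong) (auto simp: v_def)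
    then show ?thesis by simp
  qed
  have vsum: "(\<Sum>t=1..n. v t) = 0"
  proof -
    have "(\<Sum>t=i0..n. v t) = (\<Sum>t=i0..n. real (i0 - 1) / real m)"
      by (intro sum.cong) (auto simp: v_def)
    then have "(\<Sum>t=i0..n. v t) = real (i0 - 1)" using m by simp
    then show ?thesis
      using sum_split_at[of 1 "i0 - 1" n v] v_head[of "i0 - 1"] i0_ge_1 i0_le_n by simp
  qed
  have compat: "y (Suc t) < y t" if "1 \<le> t" "t < n" "v t < v (Suc t)" for t
  proof -
    have "Suc t = i0" using that(3) unfolding v_def by (auto split: if_splits)
    then show ?thesis using y_last_less_before_i0[of t] y_i0 that by simp
  qed
  obtain e where e: "0 < e"
    and step: "\<forall>t\<in>{1..<n}. y (Suc t) + e * v (Suc t) \<le> y t + e * v t"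
    and pos: "\<forall>t\<in>{1..n}. 0 < y t + e * v t"
    and sum: "(\<Sum>t=1..n. y t + e * v t) = 1 / real g"
    by (rule admissible_perturbation_exists[OF y_in_A g_ge_1 vsum compat, of "{}"]) auto
  define x where "x t = y t + e * v t" for t
  have below: "x t = y t - e" if "t < i0" for t using that unfolding x_def v_def by simp
  have x_pos: "0 < x t" if "1 \<le> t" "t \<le> n" for t using pos that unfolding x_def by auto
  have head: "(\<Prod>i=1..l. x i) \<le> real g * (\<Sum>i=Suc l..n. x i)" if l: "1 \<le> l" "l < i0" for l
  proof -
    have "0 \<le> x i \<and> x i \<le> y i" if "i \<in> {1..l}" for i
      using x_pos[of i] below[of i] that l i0_le_n e by auto
    then have "(\<Prod>i=1..l. x i) \<le> (\<Prod>i=1..l. y i)" by (rule prod_mono)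
    also have "\<dots> \<le> real g * (\<Sum>i=Suc l..n. y i)"
      using A_set_constraint[OF y_in_A] l i0_le_n by simp
    also have "\<dots> \<le> real g * (\<Sum>i=Suc l..n. x i)"
    proof (rule mult_left_mono)
      show "(\<Sum>i=Suc l..n. y i) \<le> (\<Sum>i=Suc l..n. x i)"
        using sum_tail_perturbation[OF vsum, of l y e] v_head[OF l(2)] l i0_le_n e
        unfolding x_def by simp
    qed simp
    finally show ?thesis .
  qed
  have "x \<in> A_set g n"
  proof (rule A_setI_constant_tail[OF g_ge_1 _ _ _ i0_ge_1 i0_le_n _ head])
    show "x (Suc t) \<le> x t" if "1 \<le> t" "t < n" for t using step that unfolding x_def by auto
    show "0 \<le> x n" using x_pos[of n] n_ge_3 by simp
    show "(\<Sum>i=1..n. x i) = 1 / real g" using sum unfolding x_def .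
    show "x j = x n" if "i0 \<le> j" "j \<le> n" for j
      using that y_eq_last_from_i0[OF that] i0_le_n unfolding x_def v_def by simp
  qed
  moreover have "f_fun k x < f_fun k y" unfolding f_fun_def
  proof (rule prod_strict_mono_at[where a = k])
    show "0 \<le> x t \<and> x t \<le> y t" if "t \<in> {1..k}" for t
      using that x_pos[of t] below[of t] ki k_le_n e by auto
  qed (use below ki k_ge_1 k_le_n e y_pos in auto)
  ultimately show False using y_min by fastforce
qed

text \<open>A tie before \<open>i\<^sub>0\<close> lies in a maximal run \<open>y\<^sub>h = \<dots> = y\<^sub>b\<close> with \<open>b < i\<^sub>0 \<le> k\<close>, whose
  internal constraints are slack because a constraint cannot be tight at a tie.\<close>

lemma y_strict_before_i0:
  assumes t: "1 \<le> t" "t < i0"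
  shows "y (Suc t) < y t"
proof (cases "Suc t < i0")
  case False
  then have "Suc t = i0" using t by simp
  then show ?thesis using y_i0 y_last_less_before_i0[OF t] by simp
next
  case True
  show ?thesis
  proof (rule ccontr)
    assume "\<not> y (Suc t) < y t"
    then have tie: "y (Suc t) = y t" using y_step[of t] t i0_le_n by fastforce
    define B where "B = {j \<in> {1..<i0}. y j = y t}"
    define h where "h = Min B"
    define b where "b = Max B"
    have B: "finite B" "t \<in> B" "Suc t \<in> B" unfolding B_def using t True tie by auto
    have hB: "h \<in> B" "h \<le> t" and bB: "b \<in> B" "Suc t \<le> b"
      unfolding h_def b_def using B by (auto intro: Min_in Max_in)
    then have hb: "1 \<le> h" "b < i0" "y h = y t" "y b = y t" unfolding B_def by auto
    have run: "y l = y t" if "h \<le> l" "l \<le> b" for l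
      using A_set_antimono[OF y_in_A, of h l] A_set_antimono[OF y_in_A, of l b] that hb i0_le_n
      by fastforce
    show False
    proof (rule no_improving_transfer[of h b])
      show "1 \<le> h" "h < b" "b \<le> k" using hb hB bB i0_le_k by auto
      show "y h < y (h - 1)" if "2 \<le> h"
      proof -
        have "h - 1 \<notin> B" using Min_le[OF B(1), of "h - 1"] that unfolding h_def by fastforce
        then have "y (h - 1) \<noteq> y t" using that hb hB t unfolding B_def by auto
        moreover have "y h \<le> y (h - 1)" using y_step[of "h - 1"] that hb hB bB t i0_le_n by simp
        ultimately show ?thesis using hb by simp
      qed
      show "y (Suc b) < y b" if "b < n"
      proof (cases "Suc b < i0")
        case True
        then have "Suc b \<notin> B" using Max_ge[OF B(1), of "Suc b"] unfolding b_def by fastforce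
        then have "y (Suc b) \<noteq> y t" using True unfolding B_def by auto
        then show ?thesis using y_step[of b] that hb bB by fastforce
      next
        case False
        then have "Suc b = i0" using hb by simp
        then show ?thesis using y_i0 y_last_less_before_i0[of b] hb bB by simp
      qed
      show "(\<Prod>i=1..l. y i) < real g * (\<Sum>i=Suc l..n. y i)" if "l \<in> {h..<b}" for l
        using that hb i0_le_n run[of l] run[of "Suc l"]
        by (intro A_set_constraint_strict_at_tie[OF y_in_A g_ge_1]) auto
    qed
  qed
qed

lemma eventually_block_perturbation_in_A:
  assumes i0: "2 \<le> i0"
    and slack: "(\<Prod>i=1..i0-1. y i) < real g * (\<Sum>i=i0..n. y i)"
    and w_head: "\<And>t. t < i0 - 1 \<Longrightarrow> w t = 0"
    and w_block: "\<And>t. i0 \<le> t \<Longrightarrow> w t = w i0"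
    and wsum: "(\<Sum>t=1..n. w t) = 0"
  shows "\<forall>\<^sub>F e in at_right 0. 0 < e \<and> (\<lambda>t. y t + e * w t) \<in> A_set g n"
proof -
  have compat: "y (Suc t) < y t" if "1 \<le> t" "t < n" "w t < w (Suc t)" for t
  proof -
    have "t < i0" using that(3) w_block[of t] w_block[of "Suc t"] by (cases "i0 \<le> t") auto
    then show ?thesis using y_strict_before_i0 that by simp
  qed
  have slack': "(\<Prod>i=1..l. y i) < real g * (\<Sum>i=Suc l..n. y i)" if "l \<in> {i0 - 1}" for l
    using slack that i0 by simp
  show ?thesis
  proof (rule eventually_mono[OF eventually_admissible_perturbation[OF y_in_A g_ge_1 wsum compat
      finite.insertI[OF finite.emptyI] slack']])
    fix e assume e: "0 < e
      \<and> (\<forall>t\<in>{1..<n}. y (Suc t) + e * w (Suc t) \<le> y t + e * w t)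
      \<and> (\<forall>t\<in>{1..n}. 0 < y t + e * w t)
      \<and> (\<Sum>t=1..n. y t + e * w t) = 1 / real g
      \<and> (\<forall>l\<in>{i0 - 1}. (\<Prod>i=1..l. y i + e * w i) < real g * (\<Sum>i=Suc l..n. y i + e * w i))"
    have head: "(\<Prod>i=1..l. y i + e * w i) \<le> real g * (\<Sum>i=Suc l..n. y i + e * w i)"
      if l: "1 \<le> l" "l < i0" for l
    proof (cases "l = i0 - 1")
      case True
      then show ?thesis using e by (auto intro: less_imp_le)
    next
      case False
      have zero: "w i = 0" if "i \<in> {1..l}" for i using False l that by (intro w_head) auto
      then have "(\<Prod>i=1..l. y i + e * w i) = (\<Prod>i=1..l. y i)" and "(\<Sum>i=1..l. w i) = 0"
        by (auto intro: prod.cong)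
      then show ?thesis
        using sum_tail_perturbation[OF wsum, of l y e] A_set_constraint[OF y_in_A, of l] l i0_le_n
        by simp
    qed
    have "(\<lambda>t. y t + e * w t) \<in> A_set g n"
    proof (rule A_setI_constant_tail[OF g_ge_1 _ _ _ i0_ge_1 i0_le_n _ head])
      show "0 \<le> y n + e * w n" using e n_ge_3 by (auto intro: less_imp_le)
      show "y j + e * w j = y n + e * w n" if "i0 \<le> j" "j \<le> n" for j
        using that y_eq_last_from_i0[OF that] w_block[of j] w_block[of n] i0_le_n by simp
    qed (use e in auto)
    then show "0 < e \<and> (\<lambda>t. y t + e * w t) \<in> A_set g n" using e by simp
  qed
qed

text \<open>If the last constraint before the block were slack, both \<open>y \<plusminus> e v\<close> with
  \<open>v = \<delta>\<^bsub>i\<^sub>0\<^sub>-\<^sub>1\<^esub> - \<chi>\<^bsub>[i\<^sub>0, n]\<^esub>/(n + 1 - i\<^sub>0)\<close> would be admissible, but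
  \<open>f\<^sub>k(y + e v) f\<^sub>k(y - e v) < f\<^sub>k(y)\<^sup>2\<close>.\<close>

lemma constraint_tight_before_block:
  assumes i0: "2 \<le> i0"
  shows "(\<Prod>i=1..i0-1. y i) = real g * (\<Sum>i=i0..n. y i)"
proof (rule ccontr)
  assume "(\<Prod>i=1..i0-1. y i) \<noteq> real g * (\<Sum>i=i0..n. y i)"
  moreover have "(\<Prod>i=1..i0-1. y i) \<le> real g * (\<Sum>i=i0..n. y i)"
    using A_set_constraint[OF y_in_A, of "i0 - 1"] i0 i0_le_n by simp
  ultimately have slack: "(\<Prod>i=1..i0-1. y i) < real g * (\<Sum>i=i0..n. y i)" by simp
  define m where "m = Suc n - i0"
  have m: "real (card {i0..n}) = real m" "0 < real m" using i0_le_n unfolding m_def by auto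
  define v :: "nat \<Rightarrow> real"
    where "v t = (if t = i0 - 1 then 1 else if i0 \<le> t then - 1 / real m else 0)" for t
  have v_head: "v t = 0" if "t < i0 - 1" for t using that unfolding v_def by auto
  have v_block: "v t = v i0" if "i0 \<le> t" for t using that i0 unfolding v_def by auto
  have vsum: "(\<Sum>t=1..n. v t) = 0"
  proof -
    have "(\<Sum>t=1..i0-1. v t) = (\<Sum>t=1..i0-1. if t = i0 - 1 then 1 else 0)"
      by (intro sum.cong) (auto simp: v_def)
    then have head: "(\<Sum>t=1..i0-1. v t) = 1" using i0 by simp
    have "(\<Sum>t=i0..n. v t) = (\<Sum>t=i0..n. - 1 / real m)"
      using i0 by (intro sum.cong) (auto simp: v_def)
    then have "(\<Sum>t=i0..n. v t) = -1" using m by simp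
    then show ?thesis using sum_split_at[of 1 "i0 - 1" n v] head i0 i0_le_n by simp
  qed
  have "\<forall>\<^sub>F e in at_right 0. 0 < e \<and> (\<lambda>t. y t + e * v t) \<in> A_set g n"
    by (rule eventually_block_perturbation_in_A[OF i0 slack v_head v_block vsum])
  moreover have "\<forall>\<^sub>F e in at_right 0. 0 < e \<and> (\<lambda>t. y t + e * - v t) \<in> A_set g n"
  proof (rule eventually_block_perturbation_in_A[OF i0 slack])
    show "- v t = 0" if "t < i0 - 1" for t using v_head[OF that] by simp
    show "- v t = - v i0" if "i0 \<le> t" for t using v_block[OF that] by simp
    show "(\<Sum>t=1..n. - v t) = 0" using vsum by (simp add: sum_negf)
  qed
  ultimately have "\<forall>\<^sub>F e in at_right 0. (0 < e \<and> (\<lambda>t. y t + e * v t) \<in> A_set g n)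
      \<and> (0 < e \<and> (\<lambda>t. y t + e * - v t) \<in> A_set g n)"
    by (rule eventually_conj)
  then obtain e where e: "0 < e"
    and plus: "(\<lambda>t. y t + e * v t) \<in> A_set g n" and minus: "(\<lambda>t. y t + e * - v t) \<in> A_set g n"
    using eventually_happens'[OF trivial_limit_at_right_real] by blast
  have fy: "0 < f_fun k y" unfolding f_fun_def using k_le_n by (intro prod_pos y_pos) auto
  have "f_fun k y * f_fun k y \<le> f_fun k (\<lambda>t. y t + e * v t) * f_fun k (\<lambda>t. y t + e * - v t)"
    using y_min[OF plus] y_min[OF minus] fy by (intro mult_mono) auto
  also have "\<dots> = (\<Prod>t=1..k. (y t + e * v t) * (y t + e * - v t))"
    unfolding f_fun_def by (simp add: prod.distrib)
  also have "\<dots> < (\<Prod>t=1..k. y t * y t)"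
  proof (rule prod_strict_mono_at[where a = "i0 - 1"])
    show "0 \<le> (y t + e * v t) * (y t + e * - v t) \<and> (y t + e * v t) * (y t + e * - v t) \<le> y t * y t"
      if "t \<in> {1..k}" for t
    proof
      have "0 < y t + e * v t" "0 < y t + e * - v t"
        using A_set_pos[OF plus g_ge_1, of t] A_set_pos[OF minus g_ge_1, of t] that k_le_n by auto
      then show "0 \<le> (y t + e * v t) * (y t + e * - v t)" by simp
      have "(y t + e * v t) * (y t + e * - v t) = y t * y t - (e * v t)\<^sup>2"
        by (simp add: algebra_simps power2_eq_square)
      then show "(y t + e * v t) * (y t + e * - v t) \<le> y t * y t" by simp
    qed
    show "(y (i0 - 1) + e * v (i0 - 1)) * (y (i0 - 1) + e * - v (i0 - 1)) < y (i0 - 1) * y (i0 - 1)"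
      using e by (simp add: v_def algebra_simps)
  qed (use i0 i0_le_k k_le_n y_pos in auto)
  also have "\<dots> = f_fun k y * f_fun k y" unfolding f_fun_def by (simp add: prod.distrib)
  finally show False by simp
qed

lemma constraint_tight_before_i0:
  assumes i: "1 \<le> i" "i < i0"
  shows "(\<Prod>j=1..i. y j) = real g * (\<Sum>j=Suc i..n. y j)"
proof (cases "Suc i < i0")
  case True
  show ?thesis
  proof (rule ccontr)
    assume "(\<Prod>j=1..i. y j) \<noteq> real g * (\<Sum>j=Suc i..n. y j)"
    then have slack: "(\<Prod>j=1..i. y j) < real g * (\<Sum>j=Suc i..n. y j)"
      using A_set_constraint[OF y_in_A, of i] i i0_le_n by fastforce
    show False
    proof (rule no_improving_transfer[of i "Suc i"])
      show "1 \<le> i" "i < Suc i" "Suc i \<le> k" using i True i0_le_k by auto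
      show "y i < y (i - 1)" if "2 \<le> i" using y_strict_before_i0[of "i - 1"] that i by simp
      show "y (Suc (Suc i)) < y (Suc i)" using y_strict_before_i0[of "Suc i"] True by simp
      show "(\<Prod>j=1..l. y j) < real g * (\<Sum>j=Suc l..n. y j)" if "l \<in> {i..<Suc i}" for l
        using slack that by simp
    qed
  qed
next
  case False
  then have "i = i0 - 1" "2 \<le> i0" using i by auto
  then show ?thesis using constraint_tight_before_block by simp
qed

end

theorem lemma3p9:
  fixes g n k i0 :: nat and y :: "nat \<Rightarrow> real"
  assumes "g \<ge> 1" and "n \<ge> 3" and "k \<in> {1..n}"
    and "y \<in> A_set g n"
    and "\<forall>x\<in>A_set g n. f_fun k y \<le> f_fun k x"
    and "i0 = (LEAST i. 1 \<le> i \<and> y i = y n)"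
  shows "i0 \<le> k
    \<and> (\<forall>i\<in>{1..<i0}. y i > y (Suc i))
    \<and> (\<forall>i\<in>{1..<i0}. (\<Prod>j=1..i. y j) = real g * (\<Sum>j=Suc i..n. y j))"
proof -
  interpret f_minimizer g n k i0 y
    using assms by unfold_locales auto
  show ?thesis using i0_le_k y_strict_before_i0 constraint_tight_before_i0 by auto
qed

end
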